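(* Let $n\ge2$, $f:\mathbb{R}^n\to\mathbb{R}^n$ continuously differentiable, $b_0\in\mathbb{R}^n_{\ge0}$, $\mu,\theta>0$, $r:=\mu/\theta$, and let $x^*\in\mathbb{R}^n_{\ge0}$, $u_*>0$ satisfy $x^*_n=r$ and $f(x^* )-u_*re_n+b_0=0$. Let $J:=\partial f/\partial x(x^* )$ with blocks $J_{12}:=S^TJe_n$, $J_{21}:=e_n^TJS$. Assume $J$ is Hurwitz stable and that $J_{12}=0$ or $J_{21}=0$. Then for all $\eta,k_p>0$ the equilibrium $\big(x^*,\ \mu/(\eta u_* ),\ u_*/k_p\big)$ of $\dot x=f(x)-k_px_nz_2e_n+b_0$, $\dot z_1=\mu-\eta k_pz_1z_2$, $\dot z_2=\theta x_n-\eta k_pz_1z_2$ is locally exponentially stable.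
   Context: $S:=[e_1\ \cdots\ e_{n-1}]$, $e_i$ standard basis vectors; $x_n=e_n^Tx$. Hurwitz stable: all eigenvalues have negative real part. An equilibrium is called locally exponentially stable here if the Jacobian matrix of the vector field at the equilibrium is Hurwitz stable. *)

theory Defs
  imports "HOL-Analysis.Analysis"
begin

text \<open>A complex number lam is an eigenvalue of the real linear map L iff it is an
eigenvalue of the complexification of L, i.e. there is a nonzero complex vector
w = u + i v with L w = lam w.\<close>
definition complex_eigenvalue :: "('a::real_vector \<Rightarrow> 'a) \<Rightarrow> complex \<Rightarrow> bool" where
  "complex_eigenvalue L lam \<longleftrightarrow>
     (\<exists>u v. (u \<noteq> 0 \<or> v \<noteq> 0) \<and>
            L u = Re lam *\<^sub>R u - Im lam *\<^sub>R v \<and>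
            L v = Im lam *\<^sub>R u + Re lam *\<^sub>R v)"

definition hurwitz :: "('a::real_vector \<Rightarrow> 'a) \<Rightarrow> bool" where
  "hurwitz L \<longleftrightarrow> (\<forall>lam. complex_eigenvalue L lam \<longrightarrow> Re lam < 0)"

definition loc_exp_stable :: "('a::real_normed_vector \<Rightarrow> 'a) \<Rightarrow> 'a \<Rightarrow> bool" where
  "loc_exp_stable F p \<longleftrightarrow> F p = 0 \<and> (\<exists>F'. (F has_derivative F') (at p) \<and> hurwitz F')"

end

theory Submission
  imports Defs
begin

text \<open>At the equilibrium the linearisation is block triangular with respect to the coordinates
  other than the controlled one and the three-dimensional loop formed by the controlled
  coordinate and the two controller states. Under either block condition on the Jacobian
  \<open>J\<close> of \<open>f\<close>, every eigenvalue of the linearisation is an eigenvalue of \<open>J\<close> or a root of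
  the characteristic polynomial of this loop. That polynomial is a cubic with positive
  coefficients satisfying the Routh-Hurwitz inequality, so all its roots lie in the open
  left half plane.\<close>

definition eigenpair :: "('a::real_vector \<Rightarrow> 'a) \<Rightarrow> complex \<Rightarrow> 'a \<Rightarrow> 'a \<Rightarrow> bool" where
  "eigenpair L lam u v \<longleftrightarrow>
     L u = Re lam *\<^sub>R u - Im lam *\<^sub>R v \<and> L v = Im lam *\<^sub>R u + Re lam *\<^sub>R v"

lemma complex_eigenvalue_iff_eigenpair:
  "complex_eigenvalue L lam \<longleftrightarrow> (\<exists>u v. (u \<noteq> 0 \<or> v \<noteq> 0) \<and> eigenpair L lam u v)"
  by (simp add: complex_eigenvalue_def eigenpair_def)

lemma hurwitz_eigenpair_Re_neg:
  assumes "hurwitz L" "eigenpair L lam u v" "u \<noteq> 0 \<or> v \<noteq> 0"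
  shows "Re lam < 0"
  using assms by (auto simp: hurwitz_def complex_eigenvalue_iff_eigenpair)

lemma hurwitz_real_eigenvalue_neg:
  assumes "hurwitz L" "linear L" "L x = c *\<^sub>R x" "x \<noteq> 0"
  shows "c < 0"
proof -
  have "eigenpair L (of_real c) x 0"
    using assms(2,3) by (simp add: eigenpair_def linear_0)
  then show ?thesis
    using hurwitz_eigenpair_Re_neg[OF assms(1)] assms(4) by force
qed

lemma cubic_Routh_Hurwitz:
  fixes s :: complex and A B C :: real
  assumes "A > 0" "B > 0" "C > 0" "A * B > C"
    and root: "s * s * s + of_real A * s * s + of_real B * s + of_real C = 0"
  shows "Re s < 0"
proof (rule ccontr)
  assume "\<not> Re s < 0"
  then have x0: "Re s \<ge> 0" by simp
  define x y where "x = Re s" and "y = Im s"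
  have re: "x*x*x - 3*x*y*y + A*(x*x - y*y) + B*x + C = 0"
    using arg_cong[OF root, of Re] by (simp add: x_def y_def algebra_simps)
  have im: "y * (3*x*x - y*y + 2*A*x + B) = 0"
    using arg_cong[OF root, of Im] by (simp add: x_def y_def algebra_simps)
  show False
  proof (cases "y = 0")
    case True
    with re have "x*x*x + A*x*x + B*x + C = 0" by (simp add: algebra_simps)
    moreover have "x*x*x + A*x*x + B*x \<ge> 0" using x0 assms by (simp add: x_def)
    ultimately show False using assms by linarith
  next
    case False
    with im have yy: "y*y = 3*x*x + 2*A*x + B" by simp
    \<comment> \<open>eliminating \<open>y\<close> turns the real part into \<open>-8x\<^sup>3 - 8Ax\<^sup>2 - 2(B + A\<^sup>2)x = AB - C\<close>\<close>
    have "3*x*y*y = 3*x*(3*x*x + 2*A*x + B)" using yy by (metis mult.assoc)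
    with re yy have "-8*x*x*x - 8*A*x*x - (2*B + 2*A*A)*x - A*B + C = 0"
      by (simp add: algebra_simps)
    moreover have "8*x*x*x + 8*A*x*x + (2*B + 2*A*A)*x \<ge> 0"
      using x0 assms by (simp add: x_def)
    ultimately show False using assms by linarith
  qed
qed

lemma core_loop_only_zero_solution:
  fixes s x z1 z2 :: complex and d c a p th :: real
  assumes pos: "d > 0" "c > 0" "a > 0" "p > 0" "th > 0" and Re_s: "Re s \<ge> 0"
    and e1: "(s + of_real d) * x = - of_real p * z2"
    and e2: "(s + of_real c) * z1 = - of_real a * z2"
    and e3: "(s + of_real a) * z2 = of_real th * x - of_real c * z1"
  shows "x = 0 \<and> z1 = 0 \<and> z2 = 0"
proof -
  have nd: "s + of_real d \<noteq> 0" and nc: "s + of_real c \<noteq> 0"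
    using Re_s pos by (auto simp: complex_eq_iff)
  have "(s + of_real d) * (s + of_real c) * ((s + of_real a) * z2)
      = (s + of_real d) * (s + of_real c) * (of_real th * x - of_real c * z1)"
    using e3 by simp
  also have "\<dots> = of_real th * (s + of_real c) * ((s + of_real d) * x)
                   - of_real c * (s + of_real d) * ((s + of_real c) * z1)"
    by (simp add: algebra_simps)
  also have "\<dots> = - of_real th * of_real p * (s + of_real c) * z2
                   + of_real c * of_real a * (s + of_real d) * z2"
    using e1 e2 by simp
  finally have "(s * s * s + of_real (a+c+d) * s * s + of_real (d*(a+c) + th*p) * s
                 + of_real (th*p*c)) * z2 = 0"
    by (simp add: algebra_simps)
  moreover have "Re s < 0" if "s * s * s + of_real (a+c+d) * s * s
                   + of_real (d*(a+c) + th*p) * s + of_real (th*p*c) = 0"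
  proof (rule cubic_Routh_Hurwitz[OF _ _ _ _ that])
    have "(a+c+d)*(d*(a+c) + th*p) \<ge> (a+c+d)*(th*p)" using pos by simp
    moreover have "(a+c+d)*(th*p) > c*(th*p)" using pos by simp
    ultimately show "(a+c+d)*(d*(a+c) + th*p) > th*p*c" by (simp add: algebra_simps)
  qed (use pos in \<open>auto intro: add_pos_pos\<close>)
  ultimately have "z2 = 0" using Re_s by fastforce
  then show ?thesis using e1 e2 nd nc by simp
qed

lemma row_axis_eigenvector_exists:
  fixes L :: "real^'n \<Rightarrow> real^'n"
  assumes "linear L" and row: "\<And>x. L x $ l = c * x $ l"
  shows "\<exists>x. x \<noteq> 0 \<and> L x = c *\<^sub>R x"
proof -
  define M where "M x = L x - c *\<^sub>R x" for x
  have "linear M"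
    unfolding M_def
    by (rule linearI) (simp_all add: linear_add[OF assms(1)] linear_scale[OF assms(1)] algebra_simps)
  have "M x $ l \<noteq> axis l 1 $ l" for x
    using row by (simp add: M_def)
  then have "axis l 1 \<notin> range M"
    by (metis axis_nth rangeE)
  then have "\<not> inj M"
    using linear_inj_imp_surj[OF \<open>linear M\<close>] by auto
  then obtain p q where "p \<noteq> q" "M p = M q" by (auto simp: inj_def)
  then show ?thesis
    by (intro exI[of _ "p - q"]) (simp add: M_def linear_diff[OF assms(1)] algebra_simps)
qed

text \<open>If \<open>axis l 1\<close> is an eigenvector of \<open>J\<close>, an eigenpair of \<open>J\<close> up to the \<open>l\<close>-th coordinate
  is corrected to a true eigenpair by adding multiples of \<open>axis l 1\<close>; the complex multiple
  solves \<open>t * (lam - jj) = \<rho>\<close>, where \<open>\<rho>\<close> is the defect in the \<open>l\<close>-th coordinate.\<close>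
lemma eigenpair_off_axis_correction:
  fixes J :: "real^'n \<Rightarrow> real^'n"
  assumes "linear J" and Jl: "J (axis l 1) = jj *\<^sub>R axis l 1" and ne: "lam \<noteq> of_real jj"
    and off_u: "\<And>i. i \<noteq> l \<Longrightarrow> J u $ i = Re lam * u $ i - Im lam * v $ i"
    and off_v: "\<And>i. i \<noteq> l \<Longrightarrow> J v $ i = Im lam * u $ i + Re lam * v $ i"
  shows "\<exists>\<alpha> \<beta>. eigenpair J lam (u + \<alpha> *\<^sub>R axis l 1) (v + \<beta> *\<^sub>R axis l 1)"
proof -
  define t where "t = Complex (J u $ l - (Re lam * u $ l - Im lam * v $ l))
                              (J v $ l - (Im lam * u $ l + Re lam * v $ l)) / (lam - of_real jj)"
  have t: "t * (lam - of_real jj) = Complex (J u $ l - (Re lam * u $ l - Im lam * v $ l))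
                              (J v $ l - (Im lam * u $ l + Re lam * v $ l))"
    using ne by (simp add: t_def)
  have tr: "J u $ l = Re lam * (u $ l + Re t) - Im lam * (v $ l + Im t) - jj * Re t"
    using arg_cong[OF t, of Re] by (simp add: algebra_simps)
  have ti: "J v $ l = Im lam * (u $ l + Re t) + Re lam * (v $ l + Im t) - jj * Im t"
    using arg_cong[OF t, of Im] by (simp add: algebra_simps)
  have J_shift: "J (w + r *\<^sub>R axis l 1) = J w + (r * jj) *\<^sub>R axis l 1" for w r
    by (simp add: linear_add[OF assms(1)] linear_scale[OF assms(1)] Jl)
  have "eigenpair J lam (u + Re t *\<^sub>R axis l 1) (v + Im t *\<^sub>R axis l 1)"
    unfolding eigenpair_def J_shift vec_eq_iff
    using tr ti off_u off_v by (auto simp: axis_def algebra_simps)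
  then show ?thesis by blast
qed

definition closed_loop_jacobian ::
    "(real^'n \<Rightarrow> real^'n) \<Rightarrow> 'n \<Rightarrow> real \<Rightarrow> real \<Rightarrow> real \<Rightarrow> real \<Rightarrow> real \<Rightarrow>
     (real^'n) \<times> real \<times> real \<Rightarrow> (real^'n) \<times> real \<times> real" where
  "closed_loop_jacobian J l d p c a th = (\<lambda>(x, y1, y2).
     (J x - (d * x $ l + p * y2) *\<^sub>R axis l 1, - (c * y1 + a * y2), th * x $ l - (c * y1 + a * y2)))"

lemma closed_loop_has_derivative:
  fixes f J :: "real^'n \<Rightarrow> real^'n"
  assumes f: "(f has_derivative J) (at xs)"
  shows "((\<lambda>(x :: real^'n, z1 :: real, z2 :: real).
             (f x - (kp * x $ l * z2) *\<^sub>R axis l 1 + b0,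
              mu - eta * kp * z1 * z2,
              theta * x $ l - eta * kp * z1 * z2))
          has_derivative closed_loop_jacobian J l (kp * z2s) (kp * xs $ l)
                           (eta * kp * z2s) (eta * kp * z1s) theta) (at (xs, z1s, z2s))"
proof -
  have fx: "((\<lambda>p. f (fst p)) has_derivative (\<lambda>p. J (fst p))) (at (xs, z1s, z2s))"
    using has_derivative_compose[OF has_derivative_fst[OF has_derivative_ident], of f J] f
    by fastforce
  have xl: "((\<lambda>p. fst p $ l) has_derivative (\<lambda>p. fst p $ l)) (at (xs :: real^'n, z1s :: real, z2s :: real))"
    by (intro bounded_linear_imp_has_derivative bounded_linear_compose[OF bounded_linear_vec_nth]
        bounded_linear_fst)
  show ?thesis
    unfolding closed_loop_jacobian_def case_prod_unfold
    by (auto intro!: derivative_eq_intros fx xl simp: fun_eq_iff algebra_simps)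
qed

lemma closed_loop_eigenpair_off_axis:
  assumes "eigenpair (closed_loop_jacobian J l d p c a th) lam (ux, u1, u2) (vx, v1, v2)" "i \<noteq> l"
  shows "J ux $ i = Re lam * ux $ i - Im lam * vx $ i \<and> J vx $ i = Im lam * ux $ i + Re lam * vx $ i"
  using assms by (auto simp: eigenpair_def closed_loop_jacobian_def vec_eq_iff axis_def
                       dest!: spec[where x = i])

lemma closed_loop_eigenpair_core_zero:
  assumes E: "eigenpair (closed_loop_jacobian J l d p c a th) lam (ux, u1, u2) (vx, v1, v2)"
    and Jl: "J ux $ l = jj * ux $ l" "J vx $ l = jj * vx $ l"
    and pos: "jj < d" "p > 0" "c > 0" "a > 0" "th > 0" and Re_lam: "Re lam \<ge> 0"
  shows "ux $ l = 0 \<and> vx $ l = 0 \<and> u1 = 0 \<and> v1 = 0 \<and> u2 = 0 \<and> v2 = 0"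
proof -
  from E have
        Ux: "J ux - (d * ux $ l + p * u2) *\<^sub>R axis l 1 = Re lam *\<^sub>R ux - Im lam *\<^sub>R vx"
    and Vx: "J vx - (d * vx $ l + p * v2) *\<^sub>R axis l 1 = Im lam *\<^sub>R ux + Re lam *\<^sub>R vx"
    and y: "- (c * u1 + a * u2) = Re lam * u1 - Im lam * v1"
           "- (c * v1 + a * v2) = Im lam * u1 + Re lam * v1"
           "th * ux $ l - (c * u1 + a * u2) = Re lam * u2 - Im lam * v2"
           "th * vx $ l - (c * v1 + a * v2) = Im lam * u2 + Re lam * v2"
    by (simp_all add: eigenpair_def closed_loop_jacobian_def)
  have xl: "jj * ux $ l - d * ux $ l - p * u2 = Re lam * ux $ l - Im lam * vx $ l"
           "jj * vx $ l - d * vx $ l - p * v2 = Im lam * ux $ l + Re lam * vx $ l"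
    using arg_cong[OF Ux, of "\<lambda>w. w $ l"] arg_cong[OF Vx, of "\<lambda>w. w $ l"] Jl by simp_all
  have "Complex (ux $ l) (vx $ l) = 0 \<and> Complex u1 v1 = 0 \<and> Complex u2 v2 = 0"
  proof (rule core_loop_only_zero_solution[of "d - jj" c a p th lam])
    show "(lam + of_real (d - jj)) * Complex (ux $ l) (vx $ l) = - of_real p * Complex u2 v2"
      using xl by (simp add: complex_eq_iff algebra_simps)
    show "(lam + of_real c) * Complex u1 v1 = - of_real a * Complex u2 v2"
      using y by (simp add: complex_eq_iff algebra_simps)
    show "(lam + of_real a) * Complex u2 v2
          = of_real th * Complex (ux $ l) (vx $ l) - of_real c * Complex u1 v1"
      using y by (simp add: complex_eq_iff algebra_simps)
  qed (use pos Re_lam in auto)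
  then show ?thesis by (simp add: complex_eq_iff)
qed

lemma closed_loop_eigenvalue_Re_neg_column:
  fixes J :: "real^'n \<Rightarrow> real^'n"
  assumes J: "linear J" "hurwitz J" and col: "\<And>i. i \<noteq> l \<Longrightarrow> J (axis l 1) $ i = 0"
    and pos: "d \<ge> 0" "p > 0" "c > 0" "a > 0" "th > 0"
    and ev: "complex_eigenvalue (closed_loop_jacobian J l d p c a th) lam"
  shows "Re lam < 0"
proof (rule ccontr)
  assume "\<not> Re lam < 0"
  then have Re_lam: "Re lam \<ge> 0" by simp
  from ev obtain ux u1 u2 vx v1 v2 where nz: "(ux, u1, u2) \<noteq> 0 \<or> (vx, v1, v2) \<noteq> 0"
    and E: "eigenpair (closed_loop_jacobian J l d p c a th) lam (ux, u1, u2) (vx, v1, v2)"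
    unfolding complex_eigenvalue_iff_eigenpair by (metis prod_cases3)
  define jj where "jj = J (axis l 1) $ l"
  have Jl: "J (axis l 1) = jj *\<^sub>R axis l 1"
    using col by (auto simp: vec_eq_iff axis_def jj_def)
  have "jj < 0"
    using hurwitz_real_eigenvalue_neg[OF J(2,1) Jl] by (simp add: vec_eq_iff axis_def)
  show False
  proof (cases "\<exists>i. i \<noteq> l \<and> (ux $ i \<noteq> 0 \<or> vx $ i \<noteq> 0)")
    case True
    then obtain i where i: "i \<noteq> l" "ux $ i \<noteq> 0 \<or> vx $ i \<noteq> 0" by blast
    have "lam \<noteq> of_real jj" using \<open>jj < 0\<close> Re_lam by auto
    then obtain \<alpha> \<beta> where "eigenpair J lam (ux + \<alpha> *\<^sub>R axis l 1) (vx + \<beta> *\<^sub>R axis l 1)"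
      using eigenpair_off_axis_correction[OF J(1) Jl] closed_loop_eigenpair_off_axis[OF E]
      by blast
    moreover have "ux + \<alpha> *\<^sub>R axis l 1 \<noteq> 0 \<or> vx + \<beta> *\<^sub>R axis l 1 \<noteq> 0"
      using i by (auto simp: vec_eq_iff axis_def)
    ultimately show False
      using hurwitz_eigenpair_Re_neg[OF J(2)] Re_lam by fastforce
  next
    case False
    then have ux: "ux = ux $ l *\<^sub>R axis l 1" and vx: "vx = vx $ l *\<^sub>R axis l 1"
      by (auto simp: vec_eq_iff axis_def)
    have "J ux $ l = jj * ux $ l"
      by (subst ux) (simp add: linear_scale[OF J(1)] Jl)
    moreover have "J vx $ l = jj * vx $ l"
      by (subst vx) (simp add: linear_scale[OF J(1)] Jl)
    ultimately have "ux $ l = 0 \<and> vx $ l = 0 \<and> u1 = 0 \<and> v1 = 0 \<and> u2 = 0 \<and> v2 = 0"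
      using closed_loop_eigenpair_core_zero[OF E] \<open>jj < 0\<close> pos Re_lam by force
    with ux vx nz show False
      by (simp add: zero_prod_def)
  qed
qed

lemma closed_loop_eigenvalue_Re_neg_row:
  fixes J :: "real^'n \<Rightarrow> real^'n"
  assumes J: "linear J" "hurwitz J" and row: "\<And>j. j \<noteq> l \<Longrightarrow> J (axis j 1) $ l = 0"
    and pos: "d \<ge> 0" "p > 0" "c > 0" "a > 0" "th > 0"
    and ev: "complex_eigenvalue (closed_loop_jacobian J l d p c a th) lam"
  shows "Re lam < 0"
proof (rule ccontr)
  assume "\<not> Re lam < 0"
  then have Re_lam: "Re lam \<ge> 0" by simp
  from ev obtain ux u1 u2 vx v1 v2 where nz: "(ux, u1, u2) \<noteq> 0 \<or> (vx, v1, v2) \<noteq> 0"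
    and E: "eigenpair (closed_loop_jacobian J l d p c a th) lam (ux, u1, u2) (vx, v1, v2)"
    unfolding complex_eigenvalue_iff_eigenpair by (metis prod_cases3)
  define jj where "jj = J (axis l 1) $ l"
  have Jl: "J x $ l = jj * x $ l" for x
  proof -
    have "J x $ l = (\<Sum>i\<in>UNIV. x $ i * J (axis i 1) $ l)"
      by (rule Cartesian_Space.linear_componentwise) (simp add: linear_matrix_vector_mul_eq J(1))
    also have "\<dots> = (\<Sum>i\<in>UNIV. if i = l then x $ l * jj else 0)"
      by (rule sum.cong) (auto simp: jj_def row)
    finally show ?thesis by simp
  qed
  obtain x where "x \<noteq> 0" "J x = jj *\<^sub>R x"
    using row_axis_eigenvector_exists[OF J(1) Jl] by blast
  then have "jj < 0"
    using hurwitz_real_eigenvalue_neg[OF J(2,1)] by blast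
  then have zero: "ux $ l = 0 \<and> vx $ l = 0 \<and> u1 = 0 \<and> v1 = 0 \<and> u2 = 0 \<and> v2 = 0"
    using closed_loop_eigenpair_core_zero[OF E Jl Jl] pos Re_lam by force
  have "eigenpair J lam ux vx"
    unfolding eigenpair_def vec_eq_iff
  proof (intro conjI allI)
    fix i
    show "J ux $ i = (Re lam *\<^sub>R ux - Im lam *\<^sub>R vx) $ i"
         "J vx $ i = (Im lam *\<^sub>R ux + Re lam *\<^sub>R vx) $ i"
      using closed_loop_eigenpair_off_axis[OF E, of i] zero Jl[of ux] Jl[of vx]
      by (cases "i = l"; simp)+
  qed
  moreover have "ux \<noteq> 0 \<or> vx \<noteq> 0"
    using nz zero by (auto simp: zero_prod_def)
  ultimately show False
    using hurwitz_eigenpair_Re_neg[OF J(2)] Re_lam by fastforce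
qed

lemma hurwitz_closed_loop_jacobian:
  fixes J :: "real^'n \<Rightarrow> real^'n"
  assumes "linear J" "hurwitz J"
    and blocks: "(\<forall>i. i \<noteq> l \<longrightarrow> J (axis l 1) $ i = 0) \<or> (\<forall>j. j \<noteq> l \<longrightarrow> J (axis j 1) $ l = 0)"
    and "d \<ge> 0" "p > 0" "c > 0" "a > 0" "th > 0"
  shows "hurwitz (closed_loop_jacobian J l d p c a th)"
  unfolding hurwitz_def
  using blocks closed_loop_eigenvalue_Re_neg_column[OF assms(1,2) _ assms(4-)]
    closed_loop_eigenvalue_Re_neg_row[OF assms(1,2) _ assms(4-)]
  by blast

theorem mainTheorem16:
  fixes f :: "real^'n \<Rightarrow> real^'n"
    and f' :: "real^'n \<Rightarrow> ((real^'n) \<Rightarrow>\<^sub>L (real^'n))"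
    and l :: 'n
    and b0 xs :: "real^'n"
    and mu theta us :: real
  assumes n2: "CARD('n) \<ge> 2"
    and f_deriv: "\<And>x. (f has_derivative blinfun_apply (f' x)) (at x)"
    and f'_cont: "continuous_on UNIV f'"
    and b0_nonneg: "\<forall>i. b0 $ i \<ge> 0"
    and mu_pos: "mu > 0" and theta_pos: "theta > 0"
    and xs_nonneg: "\<forall>i. xs $ i \<ge> 0"
    and us_pos: "us > 0"
    and xs_last: "xs $ l = mu / theta"
    and equil: "f xs - (us * (mu / theta)) *\<^sub>R axis l 1 + b0 = 0"
    and J_hurwitz: "hurwitz (blinfun_apply (f' xs))"
    and blocks: "(\<forall>i. i \<noteq> l \<longrightarrow> (blinfun_apply (f' xs) (axis l 1)) $ i = 0)
               \<or> (\<forall>j. j \<noteq> l \<longrightarrow> (blinfun_apply (f' xs) (axis j 1)) $ l = 0)"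
  shows "\<forall>eta kp. eta > 0 \<longrightarrow> kp > 0 \<longrightarrow>
           loc_exp_stable
             (\<lambda>(x :: real^'n, z1 :: real, z2 :: real).
                (f x - (kp * x $ l * z2) *\<^sub>R axis l 1 + b0,
                 mu - eta * kp * z1 * z2,
                 theta * x $ l - eta * kp * z1 * z2))
             (xs, mu / (eta * us), us / kp)"
proof (intro allI impI)
  fix eta kp :: real
  assume eta: "eta > 0" and kp: "kp > 0"
  define z1s z2s where "z1s = mu / (eta * us)" and "z2s = us / kp"
  have "xs $ l > 0" using xs_last mu_pos theta_pos by simp
  then have pos: "kp * z2s > 0" "kp * xs $ l > 0" "eta * kp * z2s > 0" "eta * kp * z1s > 0"
    using eta kp us_pos mu_pos by (simp_all add: z1s_def z2s_def)
  have equil_values: "eta * kp * z1s * z2s = mu" "kp * xs $ l * z2s = us * (mu / theta)"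
    "theta * xs $ l = mu"
    using eta kp us_pos xs_last theta_pos by (simp_all add: z1s_def z2s_def)
  have "(f xs - (kp * xs $ l * z2s) *\<^sub>R axis l 1 + b0, mu - eta * kp * z1s * z2s,
         theta * xs $ l - eta * kp * z1s * z2s) = 0"
    using equil by (simp add: equil_values zero_prod_def)
  moreover have "hurwitz (closed_loop_jacobian (blinfun_apply (f' xs)) l (kp * z2s) (kp * xs $ l)
                   (eta * kp * z2s) (eta * kp * z1s) theta)"
    using hurwitz_closed_loop_jacobian[OF _ J_hurwitz blocks] pos theta_pos
    by (simp add: blinfun.bounded_linear_right bounded_linear.linear)
  ultimately show "loc_exp_stable (\<lambda>(x :: real^'n, z1 :: real, z2 :: real).
                (f x - (kp * x $ l * z2) *\<^sub>R axis l 1 + b0,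
                 mu - eta * kp * z1 * z2,
                 theta * x $ l - eta * kp * z1 * z2))
             (xs, mu / (eta * us), us / kp)"
    unfolding loc_exp_stable_def z1s_def[symmetric] z2s_def[symmetric] prod.case
    using closed_loop_has_derivative[OF f_deriv[of xs]] by blast
qed

end
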